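(* Let $d>k\ge3$ and $a\ge1$ be integers with $d-a^k\ge1$. Let $X=X_\Sigma$ be the smooth projective toric $d$-fold whose fan has ray generators $x_1,\dots,x_d,y_1,y_2$ and primitive relations $x_1+\cdots+x_d=ay_1$ and $y_1+y_2=0$ (so $X\cong\mathbb{P}_{\mathbb{P}^{d-1}}(\mathcal{O}(a)\oplus\mathcal{O})$). Then: (1) if $k$ is odd, $\mathrm{ch}_k(X)$ is positive; (2) if $k$ is even, $\mathrm{ch}_k(X)$ is nef but not positive.
   Context: For a smooth complete toric variety $X$ of dimension $d$ with torus invariant prime divisors $D_1,\dots,D_n$, $\mathrm{ch}_k(X)=\frac{1}{k!}\sum_i D_i^k$. For $1\le k\le d$, $\mathrm{ch}_k(X)$ is nef (resp. positive) if $(\mathrm{ch}_k(X)\cdot Y)\ge0$ (resp. $>0$) for every $k$-dimensional torus invariant irreducible closed subvariety $Y\subset X$. A primitive collection is a set of ray generators not generating a cone of the fan while every proper subset does; its primitive relation expresses the sum of its elements as a positive integer combination of the generators of the smallest cone containing that sum. *)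

theory Defs
  imports Complex_Main "HOL-Library.Multiset"
begin

text \<open>A (smooth complete) fan of dimension d with n rays indexed by 0..n-1.
  v i j is the j-th coordinate (j < d) of the ray generator with index i;
  C is the set of cones, each given by the set of indices of its rays.\<close>

text \<open>Degree of degree-d monomials in the Chow ring
  A(X) = Z[D_1..D_n] / (Stanley--Reisner ideal + linear relations),
  normalised by deg(D_sigma) = 1 for every maximal cone sigma.  A monomial is
  a multiset of ray indices.  For a smooth complete fan there is exactly one
  such function.\<close>

definition toric_deg_axioms ::
  "nat \<Rightarrow> nat \<Rightarrow> (nat \<Rightarrow> nat \<Rightarrow> int) \<Rightarrow> nat set set \<Rightarrow> (nat multiset \<Rightarrow> int) \<Rightarrow> bool" where
  "toric_deg_axioms d n v C f \<longleftrightarrow>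
     (\<forall>M. (size M \<noteq> d \<or> \<not> set_mset M \<subseteq> {..<n}) \<longrightarrow> f M = 0) \<and>
     (\<forall>S\<in>C. card S = d \<longrightarrow> f (mset_set S) = 1) \<and>
     (\<forall>M. size M = d \<and> set_mset M \<subseteq> {..<n} \<and> set_mset M \<notin> C \<longrightarrow> f M = 0) \<and>
     (\<forall>(m::nat \<Rightarrow> int) N. size N + 1 = d \<and> set_mset N \<subseteq> {..<n} \<longrightarrow>
         (\<Sum>i<n. (\<Sum>j<d. m j * v i j) * f (add_mset i N)) = 0)"

definition toric_deg ::
  "nat \<Rightarrow> nat \<Rightarrow> (nat \<Rightarrow> nat \<Rightarrow> int) \<Rightarrow> nat set set \<Rightarrow> nat multiset \<Rightarrow> int" where
  "toric_deg d n v C = (THE f. toric_deg_axioms d n v C f)"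

text \<open>Intersection number (ch_k(X) . V(tau)) where V(tau) is the torus invariant
  subvariety of the cone tau; for a smooth fan [V(tau)] = prod_{j in tau} D_j,
  and ch_k(X) = (1/k!) sum_i D_i^k.\<close>

definition ch_dot ::
  "nat \<Rightarrow> nat \<Rightarrow> (nat \<Rightarrow> nat \<Rightarrow> int) \<Rightarrow> nat set set \<Rightarrow> nat \<Rightarrow> nat set \<Rightarrow> real" where
  "ch_dot d n v C k \<tau> =
     (1 / fact k) * (\<Sum>i<n. real_of_int (toric_deg d n v C (replicate_mset k i + mset_set \<tau>)))"

text \<open>k-dimensional torus invariant irreducible closed subvarieties are the
  V(tau) for cones tau of dimension d - k.\<close>

definition ch_nef :: "nat \<Rightarrow> nat \<Rightarrow> (nat \<Rightarrow> nat \<Rightarrow> int) \<Rightarrow> nat set set \<Rightarrow> nat \<Rightarrow> bool" where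
  "ch_nef d n v C k \<longleftrightarrow> (\<forall>\<tau>\<in>C. card \<tau> = d - k \<longrightarrow> ch_dot d n v C k \<tau> \<ge> 0)"

definition ch_positive :: "nat \<Rightarrow> nat \<Rightarrow> (nat \<Rightarrow> nat \<Rightarrow> int) \<Rightarrow> nat set set \<Rightarrow> nat \<Rightarrow> bool" where
  "ch_positive d n v C k \<longleftrightarrow> (\<forall>\<tau>\<in>C. card \<tau> = d - k \<longrightarrow> ch_dot d n v C k \<tau> > 0)"

text \<open>Ray indices: 0..d-1 are x_1..x_d,
  d is y_1, d+1 is y_2.  Generators: x_i = e_i (i < d), x_d = -(e_1+..+e_{d-1}) + a e_d,
  y_1 = e_d, y_2 = -e_d; thus x_1+..+x_d = a y_1 and y_1 + y_2 = 0.\<close>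

definition PE_ray :: "nat \<Rightarrow> nat \<Rightarrow> nat \<Rightarrow> nat \<Rightarrow> int" where
  "PE_ray d a i j =
     (if i + 1 < d then (if j = i then 1 else 0)
      else if i + 1 = d then (if j + 1 < d then -1 else if j + 1 = d then int a else 0)
      else if i = d then (if j + 1 = d then 1 else 0)
      else if i = d + 1 then (if j + 1 = d then -1 else 0)
      else 0)"

definition PE_cones :: "nat \<Rightarrow> nat set set" where
  "PE_cones d = {S. S \<subseteq> {..<d+2} \<and> \<not> {..<d} \<subseteq> S \<and> \<not> {d, d+1} \<subseteq> S}"

end

theory Submission
  imports Defs
begin

text \<open>In the Chow ring of \<open>X\<close> the linear relations identify all \<open>D_{x_i}\<close> with one class \<open>h\<close> and
  give \<open>D_{y_2} = D_{y_1} + a h\<close>, while \<open>D_{y_1} D_{y_2} = 0\<close> and \<open>h^d = 0\<close>. Hence the degree of a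
  monomial only depends on its numbers \<open>s, t\<close> of factors \<open>D_{y_1}, D_{y_2}\<close>:
  \<open>D_{y_1}^s h^{d-s} = (-a)^{s-1}\<close> and \<open>D_{y_2}^t h^{d-t} = a^{t-1}\<close>. This candidate degree
  function satisfies the axioms of \<open>toric_deg\<close>, and the axioms determine it, since the linear
  relations eliminate repeated factors. Consequently \<open>k! (ch_k(X) \<cdot> V(\<tau>))\<close> is \<open>d + (-a)^k\<close>
  or \<open>d + a^k\<close> when \<open>\<tau>\<close> contains \<open>y_1\<close> resp. \<open>y_2\<close>, both positive because \<open>d > a^k\<close>, and
  \<open>(-a)^{k-1} + a^{k-1}\<close> otherwise, which is positive for odd \<open>k\<close> and zero for even \<open>k\<close>.\<close>

lemma sum_lessThan_add_2:
  fixes G :: "nat \<Rightarrow> 'b::comm_monoid_add"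
  shows "(\<Sum>i<n+2. G i) = (\<Sum>i<n. G i) + G n + G (n+1)"
  by (simp add: numeral_2_eq_2 add.assoc)

lemma card_set_mset_le_size: "card (set_mset M) \<le> size M"
  using size_mset_mono[OF mset_set_set_mset_msubset[of M]] by simp

lemma set_mset_eq_if_subset_card_ge_size:
  assumes "finite A" "A \<subseteq> set_mset M" "size M \<le> card A"
  shows "set_mset M = A"
  using assms card_set_mset_le_size[of M] card_mono[OF finite_set_mset assms(2)]
  by (intro card_subset_eq[symmetric]) auto

lemma mset_set_set_mset_if_count_le_1:
  assumes "\<forall>x. count M x \<le> 1"
  shows "mset_set (set_mset M) = M"
proof (rule multiset_eqI)
  fix x
  show "count (mset_set (set_mset M)) x = count M x"
  proof (cases "x \<in># M")
    case True
    then have "0 < count M x" by simp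
    with assms[rule_format, of x] have "count M x = 1" by linarith
    with True show ?thesis by simp
  qed (simp add: not_in_iff)
qed

lemma linear_relations_iff_coordinate_relations:
  fixes v :: "nat \<Rightarrow> nat \<Rightarrow> int" and F :: "nat \<Rightarrow> int"
  shows "(\<forall>m::nat \<Rightarrow> int. (\<Sum>i<n. (\<Sum>j<d. m j * v i j) * F i) = 0) \<longleftrightarrow>
         (\<forall>j<d. (\<Sum>i<n. v i j * F i) = 0)"
proof -
  have expand: "(\<Sum>i<n. (\<Sum>j<d. m j * v i j) * F i) = (\<Sum>j<d. m j * (\<Sum>i<n. v i j * F i))"
    for m :: "nat \<Rightarrow> int"
    by (simp add: sum_distrib_left sum_distrib_right mult.assoc sum.swap[of _ "{..<n}"])
  show ?thesis
  proof
    assume all_m: "\<forall>m::nat \<Rightarrow> int. (\<Sum>i<n. (\<Sum>j<d. m j * v i j) * F i) = 0"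
    show "\<forall>j<d. (\<Sum>i<n. v i j * F i) = 0"
    proof (intro allI impI)
      fix j assume "j < d"
      have "(\<Sum>j'<d. (if j' = j then 1 else 0) * (\<Sum>i<n. v i j' * F i)) = 0"
        using all_m[rule_format, of "\<lambda>j'. if j' = j then 1 else 0"] by (simp only: expand)
      moreover have "(\<Sum>j'<d. (if j' = j then 1 else 0) * (\<Sum>i<n. v i j' * F i)) =
          (\<Sum>j'<d. if j' = j then (\<Sum>i<n. v i j' * F i) else 0)"
        by (rule sum.cong) auto
      ultimately show "(\<Sum>i<n. v i j * F i) = 0" using \<open>j < d\<close> by simp
    qed
  qed (simp add: expand)
qed

lemma toric_deg_axioms_vanish:
  assumes "toric_deg_axioms d n v C f"
    and "\<not> (size M = d \<and> set_mset M \<subseteq> {..<n} \<and> set_mset M \<in> C)"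
  shows "f M = 0"
  using assms unfolding toric_deg_axioms_def by blast

lemma PE_ray_coordinate_sum:
  fixes F :: "nat \<Rightarrow> int"
  assumes "j < d"
  shows "(\<Sum>i<d+2. PE_ray d a i j * F i) =
    (if j + 1 < d then F j - F (d-1) else int a * F (d-1) + F d - F (d+1))"
proof (cases "j + 1 < d")
  case True
  have "(\<Sum>i<d. PE_ray d a i j * F i) =
      (\<Sum>i<d. (if i = j then F i else 0) - (if i = d-1 then F i else 0))"
    using True by (intro sum.cong) (auto simp: PE_ray_def)
  then show ?thesis
    using True by (simp add: sum_lessThan_add_2 sum_subtractf PE_ray_def)
next
  case False
  then have j: "j = d - 1" using assms by linarith
  have "(\<Sum>i<d. PE_ray d a i j * F i) = (\<Sum>i<d. if i = d-1 then int a * F i else 0)"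
    using j by (intro sum.cong) (auto simp: PE_ray_def)
  then show ?thesis
    using j assms by (simp add: sum_lessThan_add_2 PE_ray_def)
qed

lemma toric_deg_axioms_PE_relations:
  assumes f: "toric_deg_axioms d (d+2) (PE_ray d a) C f"
    and N: "size N + 1 = d" "set_mset N \<subseteq> {..<d+2}"
  shows toric_deg_axioms_PE_relation_x: "j < d \<Longrightarrow> f (add_mset j N) = f (add_mset (d-1) N)"
    and toric_deg_axioms_PE_relation_y:
      "f (add_mset (d+1) N) = int a * f (add_mset (d-1) N) + f (add_mset d N)"
proof -
  have "\<forall>m::nat \<Rightarrow> int. (\<Sum>i<d+2. (\<Sum>j<d. m j * PE_ray d a i j) * f (add_mset i N)) = 0"
    using f N by (simp add: toric_deg_axioms_def)
  then have coord: "\<forall>j<d. (\<Sum>i<d+2. PE_ray d a i j * f (add_mset i N)) = 0"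
    by (simp only: linear_relations_iff_coordinate_relations)
  show "f (add_mset j N) = f (add_mset (d-1) N)" if "j < d"
  proof (cases "j + 1 < d")
    case True
    with coord[rule_format, OF that] PE_ray_coordinate_sum[OF that, of a "\<lambda>i. f (add_mset i N)"]
    show ?thesis by simp
  next
    case False
    with that have "j = d - 1" by linarith
    then show ?thesis by simp
  qed
  have "d - 1 < d" using N by simp
  from coord[rule_format, OF this] PE_ray_coordinate_sum[OF this, of a "\<lambda>i. f (add_mset i N)"]
  show "f (add_mset (d+1) N) = int a * f (add_mset (d-1) N) + f (add_mset d N)"
    using N by simp
qed

text \<open>Degree of \<open>D_{y_1}^s D_{y_2}^t h^{d-s-t}\<close>, where \<open>h\<close> is the common class of the \<open>D_{x_i}\<close>.\<close>

definition PE_monomial_deg :: "nat \<Rightarrow> nat \<Rightarrow> nat \<Rightarrow> int" where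
  "PE_monomial_deg a s t =
     (if 0 < s \<and> 0 < t then 0
      else if 0 < s then (- int a) ^ (s - 1)
      else if 0 < t then int a ^ (t - 1)
      else 0)"

definition PE_deg :: "nat \<Rightarrow> nat \<Rightarrow> nat multiset \<Rightarrow> int" where
  "PE_deg d a M =
     (if size M = d \<and> set_mset M \<subseteq> {..<d+2}
      then PE_monomial_deg a (count M d) (count M (d+1)) else 0)"

lemma PE_monomial_deg_relation:
  "PE_monomial_deg a s (Suc t) = int a * PE_monomial_deg a s t + PE_monomial_deg a (Suc s) t"
  by (cases s; cases t) (auto simp: PE_monomial_deg_def)

lemma PE_cones_card_eq_contains_y:
  assumes "S \<in> PE_cones d" "card S = d"
  shows "d \<in> S \<or> d + 1 \<in> S"
proof (rule ccontr)
  assume "\<not> (d \<in> S \<or> d + 1 \<in> S)"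
  with assms(1) have "S \<subseteq> {..<d}" by (auto simp: PE_cones_def less_Suc_eq)
  with assms(2) have "S = {..<d}" by (intro card_subset_eq) auto
  with assms(1) show False by (simp add: PE_cones_def)
qed

lemma PE_deg_linear_relation:
  assumes N: "size N + 1 = d" "set_mset N \<subseteq> {..<d+2}"
  shows "(\<Sum>i<d+2. (\<Sum>j<d. m j * PE_ray d a i j) * PE_deg d a (add_mset i N)) = 0"
proof -
  define F where "F i = PE_deg d a (add_mset i N)" for i
  define s t where "s = count N d" and "t = count N (d+1)"
  have F: "F i = PE_monomial_deg a (s + of_bool (i = d)) (t + of_bool (i = d+1))"
    if "i < d+2" for i
    using N that by (simp add: F_def PE_deg_def s_def t_def)
  have F_x: "F j = PE_monomial_deg a s t" if "j < d" for j
    using F that by simp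
  have "d - 1 < d" using N by simp
  then have F_x_rel: "F j = F (d-1)" if "j < d" for j
    using F_x that by simp
  have F_y_rel: "F (d+1) = int a * F (d-1) + F d"
    using F F_x[OF \<open>d - 1 < d\<close>] by (simp add: PE_monomial_deg_relation)
  have "\<forall>j<d. (\<Sum>i<d+2. PE_ray d a i j * F i) = 0"
  proof (intro allI impI)
    fix j assume "j < d"
    show "(\<Sum>i<d+2. PE_ray d a i j * F i) = 0"
      unfolding PE_ray_coordinate_sum[OF \<open>j < d\<close>] using F_x_rel[OF \<open>j < d\<close>] F_y_rel by simp
  qed
  then have "\<forall>m::nat \<Rightarrow> int. (\<Sum>i<d+2. (\<Sum>j<d. m j * PE_ray d a i j) * F i) = 0"
    by (simp only: linear_relations_iff_coordinate_relations)
  then show ?thesis unfolding F_def by (rule spec)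
qed

lemma toric_deg_axioms_PE_deg:
  "toric_deg_axioms d (d+2) (PE_ray d a) (PE_cones d) (PE_deg d a)"
  unfolding toric_deg_axioms_def
proof (intro conjI allI impI ballI)
  fix M :: "nat multiset" assume "size M \<noteq> d \<or> \<not> set_mset M \<subseteq> {..<d+2}"
  then show "PE_deg d a M = 0" by (auto simp: PE_deg_def)
next
  fix S assume S: "S \<in> PE_cones d" "card S = d"
  then have "S \<subseteq> {..<d+2}" "\<not> {d, d+1} \<subseteq> S" by (auto simp: PE_cones_def)
  with PE_cones_card_eq_contains_y[OF S] show "PE_deg d a (mset_set S) = 1"
    using S(2) finite_subset[of S "{..<d+2}"] by (auto simp: PE_deg_def PE_monomial_deg_def)
next
  fix M :: "nat multiset"
  assume M: "size M = d \<and> set_mset M \<subseteq> {..<d+2} \<and> set_mset M \<notin> PE_cones d"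
  show "PE_deg d a M = 0"
  proof (cases "{d, d+1} \<subseteq> set_mset M")
    case True
    with M show ?thesis by (auto simp: PE_deg_def PE_monomial_deg_def)
  next
    case False
    with M have "set_mset M = {..<d}"
      by (intro set_mset_eq_if_subset_card_ge_size) (auto simp: PE_cones_def)
    then show ?thesis by (simp add: PE_deg_def PE_monomial_deg_def not_in_iff)
  qed
next
  fix m :: "nat \<Rightarrow> int" and N assume "size N + 1 = d \<and> set_mset N \<subseteq> {..<d+2}"
  then show "(\<Sum>i<d+2. (\<Sum>j<d. m j * PE_ray d a i j) * PE_deg d a (add_mset i N)) = 0"
    by (blast intro: PE_deg_linear_relation)
qed

lemma toric_deg_axioms_PE_agree_on_repeated_factor:
  assumes f: "toric_deg_axioms d (d+2) (PE_ray d a) (PE_cones d) f"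
    and g: "toric_deg_axioms d (d+2) (PE_ray d a) (PE_cones d) g"
    and N: "size N + 1 = d" "set_mset N \<subseteq> {..<d+2}" "set_mset N \<in> PE_cones d"
    and "i \<in># N"
    and agree: "\<And>l. l \<notin># N \<Longrightarrow> f (add_mset l N) = g (add_mset l N)"
  shows "f (add_mset i N) = g (add_mset i N)"
proof -
  obtain j where "j < d" "j \<notin># N"
    using N(3) by (auto simp: PE_cones_def)
  have f_g_x: "f (add_mset (d-1) N) = g (add_mset (d-1) N)"
  proof -
    have "f (add_mset (d-1) N) = f (add_mset j N)"
      using toric_deg_axioms_PE_relation_x[OF f N(1,2) \<open>j < d\<close>] by simp
    also have "\<dots> = g (add_mset j N)" by (rule agree[OF \<open>j \<notin># N\<close>])
    also have "\<dots> = g (add_mset (d-1) N)"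
      using toric_deg_axioms_PE_relation_x[OF g N(1,2) \<open>j < d\<close>] by simp
    finally show ?thesis .
  qed
  note rel_x = toric_deg_axioms_PE_relation_x[OF _ N(1,2)]
  note rel_y = toric_deg_axioms_PE_relation_y[OF _ N(1,2)]
  have "i < d \<or> i = d \<or> i = d + 1"
    using \<open>i \<in># N\<close> N(2) by auto
  then show ?thesis
  proof (elim disjE)
    assume "i < d"
    from rel_x[OF f \<open>i < d\<close>] rel_x[OF g \<open>i < d\<close>] f_g_x show ?thesis by simp
  next
    assume "i = d"
    with N(3) \<open>i \<in># N\<close> have "d + 1 \<notin># N" by (auto simp: PE_cones_def)
    with \<open>i = d\<close> rel_y[OF f] rel_y[OF g] agree f_g_x show ?thesis by (simp add: eq_diff_eq')
  next
    assume "i = d + 1"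
    with N(3) \<open>i \<in># N\<close> have "d \<notin># N" by (auto simp: PE_cones_def)
    with \<open>i = d + 1\<close> rel_y[OF f] rel_y[OF g] agree f_g_x show ?thesis by simp
  qed
qed

lemma toric_deg_axioms_PE_unique:
  assumes f: "toric_deg_axioms d (d+2) (PE_ray d a) (PE_cones d) f"
    and g: "toric_deg_axioms d (d+2) (PE_ray d a) (PE_cones d) g"
  shows "f M = g M"
proof (induction "size M - card (set_mset M)" arbitrary: M rule: less_induct)
  case less
  show ?case
  proof (cases "size M = d \<and> set_mset M \<in> PE_cones d")
    case False
    then have "\<not> (size M = d \<and> set_mset M \<subseteq> {..<d+2} \<and> set_mset M \<in> PE_cones d)"
      by blast
    with f g show ?thesis by (simp add: toric_deg_axioms_vanish)
  next
    case True
    then have size_M: "size M = d" and cone_M: "set_mset M \<in> PE_cones d" by auto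
    show ?thesis
    proof (cases "\<forall>x. count M x \<le> 1")
      case True
      then have M: "mset_set (set_mset M) = M"
        by (rule mset_set_set_mset_if_count_le_1)
      then have "card (set_mset M) = d" using size_M by (metis size_mset_set)
      with f g cone_M have "f (mset_set (set_mset M)) = g (mset_set (set_mset M))"
        by (simp add: toric_deg_axioms_def)
      then show ?thesis unfolding M .
    next
      case False
      then obtain i where "count M i > 1" by (auto simp: not_le)
      define N where "N = M - {#i#}"
      have "i \<in># M" using \<open>count M i > 1\<close> by (auto intro: count_inI)
      then have M: "M = add_mset i N" by (simp add: N_def)
      have "count N i > 0" using \<open>count M i > 1\<close> by (simp add: N_def)
      then have "i \<in># N" by simp
      have set_N: "set_mset N = set_mset M" using M \<open>i \<in># N\<close> by auto
      have size_N: "size M = size N + 1" using M by simp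
      have N: "size N + 1 = d" "set_mset N \<subseteq> {..<d+2}" "set_mset N \<in> PE_cones d"
        using size_M cone_M size_N set_N by (auto simp: PE_cones_def)
      have "f (add_mset l N) = g (add_mset l N)" if "l \<notin># N" for l
      proof (rule less.hyps)
        show "size (add_mset l N) - card (set_mset (add_mset l N)) < size M - card (set_mset M)"
          using that card_set_mset_le_size[of N] size_N set_N by simp
      qed
      with toric_deg_axioms_PE_agree_on_repeated_factor[OF f g N \<open>i \<in># N\<close>] M
      show ?thesis by simp
    qed
  qed
qed

lemma toric_deg_PE: "toric_deg d (d+2) (PE_ray d a) (PE_cones d) = PE_deg d a"
  unfolding toric_deg_def
proof (rule the_equality)
  fix f assume "toric_deg_axioms d (d+2) (PE_ray d a) (PE_cones d) f"
  then show "f = PE_deg d a"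
    using toric_deg_axioms_PE_unique toric_deg_axioms_PE_deg by blast
qed (rule toric_deg_axioms_PE_deg)

lemma PE_ch_dot_eq:
  assumes "\<tau> \<in> PE_cones d" "card \<tau> = d - k" "k \<le> d"
  defines "s \<equiv> of_bool (d \<in> \<tau>)" and "t \<equiv> of_bool (d + 1 \<in> \<tau>)"
  shows "ch_dot d (d+2) (PE_ray d a) (PE_cones d) k \<tau> =
    real_of_int (PE_monomial_deg a s (k + t) + PE_monomial_deg a (k + s) t
                 + int d * PE_monomial_deg a s t) / fact k"
proof -
  have range: "\<tau> \<subseteq> {..<d+2}" and fin: "finite \<tau>"
    using assms(1) by (auto simp: PE_cones_def intro: finite_subset)
  have deg: "PE_deg d a (replicate_mset k i + mset_set \<tau>) =
      PE_monomial_deg a ((if i = d then k else 0) + s) ((if i = d + 1 then k else 0) + t)"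
    if "i < d+2" for i
    using assms(2,3) range fin that by (auto simp: PE_deg_def s_def t_def count_mset_set')
  have "(\<Sum>i<d+2. real_of_int (PE_deg d a (replicate_mset k i + mset_set \<tau>))) =
      real_of_int (PE_monomial_deg a s (k + t) + PE_monomial_deg a (k + s) t
                   + int d * PE_monomial_deg a s t)"
    by (simp add: sum_lessThan_add_2 deg)
  then show ?thesis unfolding ch_dot_def toric_deg_PE by simp
qed

lemma PE_ch_dot_pos_if_y:
  assumes "\<tau> \<in> PE_cones d" "card \<tau> = d - k" "0 < k" "k \<le> d"
    and "int a ^ k < int d" and "d \<in> \<tau> \<or> d + 1 \<in> \<tau>"
  shows "ch_dot d (d+2) (PE_ray d a) (PE_cones d) k \<tau> > 0"
proof -
  have "\<not> (d \<in> \<tau> \<and> d + 1 \<in> \<tau>)" using assms(1) by (auto simp: PE_cones_def)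
  moreover have "0 < (- real a) ^ k + real d" "0 < real a ^ k + real d"
  proof -
    have "- (real a ^ k) \<le> (- real a) ^ k" by (cases "even k") simp_all
    moreover have "real a ^ k < real d"
      using assms(5) by (metis of_int_less_iff of_int_of_nat_eq of_int_power)
    moreover have "0 \<le> real a ^ k" by simp
    ultimately show "0 < (- real a) ^ k + real d" "0 < real a ^ k + real d" by linarith+
  qed
  ultimately show ?thesis
    using assms unfolding PE_ch_dot_eq[OF assms(1,2,4)]
    by (auto simp: PE_monomial_deg_def intro!: divide_pos_pos)
qed

lemma PE_ch_dot_no_y:
  assumes "\<tau> \<in> PE_cones d" "card \<tau> = d - k" "0 < k" "k \<le> d" "d \<notin> \<tau>" "d + 1 \<notin> \<tau>"
  shows "ch_dot d (d+2) (PE_ray d a) (PE_cones d) k \<tau> =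
    real_of_int ((- int a) ^ (k-1) + int a ^ (k-1)) / fact k"
  using assms unfolding PE_ch_dot_eq[OF assms(1-2,4)] by (simp add: PE_monomial_deg_def)

theorem proposition4p2:
  fixes d k a :: nat
  assumes "3 \<le> k" and "k < d" and "1 \<le> a" and "int d - int a ^ k \<ge> 1"
  shows "(odd k \<longrightarrow> ch_positive d (d + 2) (PE_ray d a) (PE_cones d) k) \<and>
         (even k \<longrightarrow> ch_nef d (d + 2) (PE_ray d a) (PE_cones d) k \<and>
                     \<not> ch_positive d (d + 2) (PE_ray d a) (PE_cones d) k)"
proof -
  have k: "0 < k" "k \<le> d" using assms(1,2) by auto
  have ad: "int a ^ k < int d" using assms(4) by linarith
  let ?ch = "ch_dot d (d + 2) (PE_ray d a) (PE_cones d) k"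
  let ?c = "real_of_int ((- int a) ^ (k-1) + int a ^ (k-1)) / fact k"
  have y_or_no_y: "?ch \<tau> > 0 \<or> ?ch \<tau> = ?c" if "\<tau> \<in> PE_cones d" "card \<tau> = d - k" for \<tau>
    using PE_ch_dot_pos_if_y[OF that k ad] PE_ch_dot_no_y[OF that k] by blast
  define \<tau>\<^sub>0 where "\<tau>\<^sub>0 = {..<d-k}"
  have \<tau>\<^sub>0: "\<tau>\<^sub>0 \<in> PE_cones d" "card \<tau>\<^sub>0 = d - k" "d \<notin> \<tau>\<^sub>0" "d + 1 \<notin> \<tau>\<^sub>0"
    using k by (auto simp: \<tau>\<^sub>0_def PE_cones_def subset_eq)
  show ?thesis
  proof (intro conjI impI)
    assume "odd k"
    with k assms(3) have "?c > 0" by (simp add: divide_pos_pos)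
    with y_or_no_y show "ch_positive d (d + 2) (PE_ray d a) (PE_cones d) k"
      unfolding ch_positive_def by fastforce
  next
    assume "even k"
    with k have "?c = 0" by simp
    with y_or_no_y show "ch_nef d (d + 2) (PE_ray d a) (PE_cones d) k"
      unfolding ch_nef_def by fastforce
    from \<open>?c = 0\<close> PE_ch_dot_no_y[OF \<tau>\<^sub>0(1,2) k \<tau>\<^sub>0(3,4)] \<tau>\<^sub>0(1,2)
    show "\<not> ch_positive d (d + 2) (PE_ray d a) (PE_cones d) k"
      unfolding ch_positive_def by fastforce
  qed
qed

end
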